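(* Let $q$ be a prime, $0<\rho_1<1$, $0<\epsilon<1$, and let $S\subseteq\mathbb{Z}/q\mathbb{Z}$ with $|S|\ge\rho_1 q$. Then there exists an integer $1\le h\le q-1$ such that the set $S'=\{hs \bmod q: s\in S\}$ has the property: for every integer $a$ with $|a|\le q/2$ and $\left|f_{S'}(a/q)\right|>\epsilon|S|$, we have $|a|<q^{1-\rho_1\epsilon^2}$.
   Context: $e(u)=\exp(2\pi i u)$. For a subset $T$ of $\mathbb{Z}/q\mathbb{Z}$, identified with the set of its least nonnegative residues in $\{0,\dots,q-1\}$, $f_T(t)=\sum_{s\in T} e(st)$ for real $t$. *)

theory Defs
  imports "HOL-Analysis.Analysis"
begin

definition e :: "real \<Rightarrow> complex" where
  "e u = exp (2 * complex_of_real pi * \<i> * complex_of_real u)"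

text \<open>Subsets of Z/qZ are represented by their least nonnegative residues, i.e. subsets of {0..<q}.
  f_T(t) = sum over s in T of e(s t).\<close>
definition fT :: "nat set \<Rightarrow> real \<Rightarrow> complex" where
  "fT T t = (\<Sum>s\<in>T. e (real s * t))"

end

(*
  Put \<delta> = \<rho>1 \<epsilon>^2. By Parseval and |S| \<ge> \<rho>1 q, at most (1/\<delta> - 1)/2 frequencies
  1 \<le> b \<le> (q - 1)/2 satisfy |f_S(b/q)| > \<epsilon>|S|. Pigeonholing the vectors (t b mod q)_b into boxes of side q^(1-\<delta>)
  (Dirichlet's simultaneous approximation) yields a unit t < q with every t b congruent to an
  integer of size below q^(1-\<delta>). Since f_{hS}(a/q) = f_S(h a/q), dilating by h = t^(-1) mod q
  moves the large frequencies from b to t b, i.e. into |a| < q^(1-\<delta>).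
*)
theory Submission
  imports Defs "HOL-Number_Theory.Number_Theory"
begin

lemma e_add: "e (x + y) = e x * e y"
  unfolding e_def by (simp add: distrib_left exp_add[symmetric])

lemma e_of_int: "e (of_int n) = 1"
proof -
  have "e (of_int n) = exp ((2 * of_int n * pi) * \<i>)"
    unfolding e_def by (simp add: algebra_simps)
  also have "\<dots> = 1" by (rule exp_integer_2pi) simp
  finally show ?thesis .
qed

lemma e_eq_if_diff_Ints:
  assumes "x - y \<in> \<int>"
  shows "e x = e y"
proof -
  obtain n where "x - y = of_int n" using assms by (auto elim: Ints_cases)
  then have "x = y + of_int n" by simp
  then show ?thesis by (simp add: e_add e_of_int)
qed

lemma e_minus: "e (- x) = cnj (e x)"
  unfolding e_def by (simp add: exp_cnj)

lemma e_power: "e x ^ n = e (real n * x)"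
  unfolding e_def by (simp add: exp_of_nat_mult[symmetric] algebra_simps)

lemma Ints_if_e_eq_1:
  assumes "e x = 1"
  shows "x \<in> \<int>"
proof -
  have "exp (complex_of_real (2 * pi * x) * \<i>) = 1"
    using assms unfolding e_def by (simp add: algebra_simps)
  then obtain n :: int where "2 * pi * x = of_int (2 * n) * pi" by (auto simp: exp_eq_1)
  then show ?thesis by simp
qed

lemma e_cong:
  assumes "q > 0" "[x = y] (mod int q)"
  shows "e (of_int x / real q) = e (of_int y / real q)"
proof -
  obtain k where "x - y = int q * k" using assms(2) by (auto simp: cong_iff_dvd_diff elim: dvdE)
  then have "of_int x / real q - of_int y / real q = of_int k"
    using assms(1) by (simp flip: diff_divide_distrib of_int_diff)
  then show ?thesis by (intro e_eq_if_diff_Ints) simp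
qed

lemma sum_e_roots_of_unity:
  assumes "q > 0"
  shows "(\<Sum>b<q. e (of_int d * real b / real q)) = (if int q dvd d then of_nat q else 0)"
proof -
  define z where "z = e (of_int d / real q)"
  have powers: "e (of_int d * real b / real q) = z ^ b" for b
    unfolding z_def e_power by (simp add: algebra_simps)
  show ?thesis
  proof (cases "int q dvd d")
    case True
    then obtain k where "d = int q * k" by blast
    then have "z = 1" unfolding z_def using assms by (simp add: e_of_int)
    then show ?thesis using True by (simp add: powers)
  next
    case False
    have "z \<noteq> 1"
    proof
      assume "z = 1"
      then have "of_int d / real q \<in> \<int>" unfolding z_def by (rule Ints_if_e_eq_1)
      then obtain k where "of_int d / real q = of_int k" by (auto elim: Ints_cases)
      then have "of_int d = real_of_int (int q * k)" using assms by (simp add: field_simps)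
      then have "d = int q * k" by linarith
      then show False using False by simp
    qed
    moreover have "z ^ q = 1" unfolding z_def e_power using assms by (simp add: e_of_int)
    ultimately show ?thesis using False by (simp add: powers sum_gp_strict)
  qed
qed

lemma fT_zero: "fT S 0 = of_nat (card S)"
  by (simp add: fT_def e_def)

lemma fT_uminus: "fT S (- t) = cnj (fT S t)"
  by (simp add: fT_def cnj_sum flip: e_minus)

lemma fT_cong:
  assumes "q > 0" "[x = y] (mod int q)"
  shows "fT S (of_int x / real q) = fT S (of_int y / real q)"
proof -
  have "e (real s * (of_int x / real q)) = e (real s * (of_int y / real q))" for s
    using e_cong[OF assms(1) cong_scalar_left[OF assms(2), of "int s"]] by simp
  then show ?thesis unfolding fT_def by simp
qed

lemma norm_fT_reflect:
  assumes "q > 0" "b \<le> q"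
  shows "norm (fT S (real (q - b) / real q)) = norm (fT S (real b / real q))"
proof -
  have "[int (q - b) = - int b] (mod int q)"
    using assms(2) by (simp add: of_nat_diff cong_iff_dvd_diff)
  from fT_cong[OF assms(1) this, of S]
  have "fT S (real (q - b) / real q) = fT S (- (real b / real q))"
    by simp
  then show ?thesis by (simp add: fT_uminus)
qed

lemma fT_image_mult_mod:
  assumes "q > 0" "inj_on (\<lambda>s. (h * s) mod q) S"
  shows "fT ((\<lambda>s. (h * s) mod q) ` S) (of_int a / real q) = fT S (of_int (int h * a) / real q)"
proof -
  have "[int ((h * s) mod q) * a = int s * (int h * a)] (mod int q)" for s
    by (simp add: of_nat_mod cong_def mod_mult_right_eq algebra_simps)
  then have "e (real ((h * s) mod q) * (of_int a / real q)) = e (real s * (of_int (int h * a) / real q))" for s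
    using e_cong[OF assms(1)] by (metis of_int_mult of_int_of_nat_eq times_divide_eq_right)
  then show ?thesis unfolding fT_def sum.reindex[OF assms(2)] by simp
qed

lemma parseval_fT:
  assumes "q > 0" "S \<subseteq> {0..<q}"
  shows "(\<Sum>b<q. (norm (fT S (real b / real q)))\<^sup>2) = real q * real (card S)"
proof -
  have "finite S" using assms(2) finite_subset by blast
  have orth: "(\<Sum>b<q. e (of_int (int s - int s') * real b / real q)) = (if s' = s then of_nat q else 0)"
    if "s \<in> S" "s' \<in> S" for s s'
  proof -
    have "s < q" "s' < q" using that assms(2) by auto
    have "int q dvd int s - int s' \<longleftrightarrow> [s = s'] (mod q)"
      by (simp add: cong_iff_dvd_diff flip: cong_int_iff)
    also have "\<dots> \<longleftrightarrow> s' = s"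
      using \<open>s < q\<close> \<open>s' < q\<close> cong_less_imp_eq_nat[of s q s'] by auto
    finally have "int q dvd int s - int s' \<longleftrightarrow> s' = s" .
    then show ?thesis using sum_e_roots_of_unity[OF assms(1)] by presburger
  qed
  have "complex_of_real (\<Sum>b<q. (norm (fT S (real b / real q)))\<^sup>2)
      = (\<Sum>b<q. fT S (real b / real q) * cnj (fT S (real b / real q)))"
    by (simp only: of_real_sum complex_norm_square)
  also have "\<dots> = (\<Sum>b<q. \<Sum>s'\<in>S. \<Sum>s\<in>S. e (of_int (int s - int s') * real b / real q))"
    unfolding fT_def
    by (simp add: sum_distrib_left sum_distrib_right e_minus[symmetric] e_add[symmetric]
        algebra_simps diff_divide_distrib)
  also have "\<dots> = (\<Sum>s'\<in>S. \<Sum>s\<in>S. \<Sum>b<q. e (of_int (int s - int s') * real b / real q))"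
    by (subst sum.swap) (simp only: sum.swap[of _ "{..<q}"])
  also have "\<dots> = (\<Sum>s'\<in>S. \<Sum>s\<in>S. if s' = s then of_nat q else 0)"
    by (intro sum.cong refl orth)
  also have "\<dots> = complex_of_real (real q * real (card S))"
    using \<open>finite S\<close> by simp
  finally show ?thesis by (simp only: of_real_eq_iff)
qed

text \<open>Since |f_S(-b/q)| = |f_S(b/q)|, for odd q the nonzero large frequencies are
  represented up to sign by 1 \<le> b \<le> (q - 1)/2.\<close>

definition large_spectrum :: "nat \<Rightarrow> nat set \<Rightarrow> real \<Rightarrow> nat set" where
  "large_spectrum q S thr = {b \<in> {1..(q - 1) div 2}. thr < norm (fT S (real b / real q))}"

lemma card_large_spectrum_bound:
  assumes "q > 0" "S \<subseteq> {0..<q}" "0 \<le> thr" "thr \<le> real (card S)"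
  shows "real (1 + 2 * card (large_spectrum q S thr)) * thr\<^sup>2 \<le> real q * real (card S)"
proof -
  define B where "B = large_spectrum q S thr"
  define F where "F b = norm (fT S (real b / real q))" for b
  define P where "P = insert 0 (B \<union> (\<lambda>b. q - b) ` B)"
  have B_range: "1 \<le> b" "2 * b < q" if "b \<in> B" for b
    using that by (auto simp: B_def large_spectrum_def)
  have "finite B" by (simp add: B_def large_spectrum_def)
  moreover have "B \<inter> (\<lambda>b. q - b) ` B = {}"
  proof -
    have "q - b' \<notin> B" if "b' \<in> B" for b'
      using B_range[OF that] B_range(2)[of "q - b'"] by linarith
    then show ?thesis by blast
  qed
  moreover have "0 \<notin> B \<union> (\<lambda>b. q - b) ` B"
    using B_range by fastforce
  moreover have "inj_on (\<lambda>b. q - b) B"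
    using B_range by (intro inj_onI) fastforce
  ultimately have card_P: "card P = 1 + 2 * card B"
    unfolding P_def by (simp add: card_Un_disjoint card_image)
  have P_sub: "P \<subseteq> {..<q}"
    unfolding P_def using assms(1) B_range by force
  have large_on_P: "thr \<le> F b" if "b \<in> P" for b
    using that assms(1,4) B_range norm_fT_reflect[OF assms(1)]
    by (fastforce simp: P_def F_def B_def large_spectrum_def fT_zero)
  have "real (card P) * thr\<^sup>2 = (\<Sum>b\<in>P. thr\<^sup>2)" by simp
  also have "\<dots> \<le> (\<Sum>b\<in>P. (F b)\<^sup>2)"
    using large_on_P assms(3) by (intro sum_mono power_mono) auto
  also have "\<dots> \<le> (\<Sum>b<q. (F b)\<^sup>2)"
    using P_sub by (intro sum_mono2) auto
  also have "\<dots> = real q * real (card S)"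
    unfolding F_def by (rule parseval_fT[OF assms(1,2)])
  finally show ?thesis using card_P B_def by simp
qed

lemma card_large_spectrum_density:
  assumes "q > 0" "S \<subseteq> {0..<q}" "0 \<le> \<epsilon>" "\<epsilon> \<le> 1" "0 \<le> \<rho>" "\<rho> * real q \<le> real (card S)"
  shows "real (1 + 2 * card (large_spectrum q S (\<epsilon> * real (card S)))) * (\<rho> * \<epsilon>\<^sup>2) \<le> 1"
proof -
  define k where "k = real (1 + 2 * card (large_spectrum q S (\<epsilon> * real (card S))))"
  have "k * (\<epsilon> * real (card S))\<^sup>2 \<le> real q * real (card S)"
    unfolding k_def using assms(3,4)
    by (intro card_large_spectrum_bound[OF assms(1,2)]) (simp_all add: mult_left_le_one_le)
  then have "k * \<epsilon>\<^sup>2 * real (card S) \<le> real q"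
    by (cases "card S = 0") (simp_all add: power2_eq_square field_simps)
  moreover have "k * \<epsilon>\<^sup>2 * (\<rho> * real q) \<le> k * \<epsilon>\<^sup>2 * real (card S)"
    using assms(6) by (intro mult_left_mono) (simp_all add: k_def)
  ultimately have "(k * (\<rho> * \<epsilon>\<^sup>2)) * real q \<le> 1 * real q"
    by (simp add: algebra_simps)
  then show ?thesis
    using assms(1) unfolding k_def by (simp only: mult_le_cancel_right)
qed

lemma large_spectrum_representative:
  assumes "odd q" and large: "thr < norm (fT S (of_int x / real q))"
  obtains "[x = 0] (mod int q)"
    | b where "b \<in> large_spectrum q S thr" "[x = int b] (mod int q) \<or> [x = - int b] (mod int q)"
proof -
  have "q > 0" using assms(1) by (simp add: odd_pos)
  define r where "r = nat (x mod int q)"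
  have r: "int r = x mod int q" "r < q"
    using \<open>q > 0\<close> by (simp_all add: r_def nat_less_iff)
  have x_r: "[x = int r] (mod int q)"
    by (simp add: r(1) cong_def)
  have large_r: "thr < norm (fT S (real r / real q))"
    using large fT_cong[OF \<open>q > 0\<close> x_r, of S] by simp
  consider "r = 0" | "1 \<le> r" "r \<le> (q - 1) div 2" | "(q - 1) div 2 < r" by linarith
  then show thesis
  proof cases
    case 1
    then show thesis using x_r that(1) by simp
  next
    case 2
    then show thesis using x_r large_r that(2)[of r] by (simp add: large_spectrum_def)
  next
    case 3
    define b where "b = q - r"
    have "1 \<le> b" "b \<le> (q - 1) div 2"
      using 3 r(2) assms(1) by (auto simp: b_def elim!: oddE)
    moreover have "thr < norm (fT S (real b / real q))"
      using large_r norm_fT_reflect[OF \<open>q > 0\<close>, of b S] r(2) by (simp add: b_def)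
    moreover have "[x = - int b] (mod int q)"
    proof -
      have "[int r = int r - int q] (mod int q)" by (simp add: cong_iff_dvd_diff)
      from cong_trans[OF x_r this] show ?thesis using r(2) by (simp add: b_def of_nat_diff)
    qed
    ultimately show thesis using that(2)[of b] by (simp add: large_spectrum_def)
  qed
qed

lemma abs_diff_lt_if_div_eq:
  fixes m n L :: nat
  assumes "m div L = n div L" "0 < L"
  shows "\<bar>int m - int n\<bar> < int L"
proof -
  have "int m = int L * int (n div L) + int (m mod L)" "int n = int L * int (n div L) + int (n mod L)"
    using assms(1) by (metis div_mult_mod_eq mult.commute of_nat_add of_nat_mult)+
  moreover have "m mod L < L" "n mod L < L" using assms(2) by simp_all
  ultimately show ?thesis by linarith
qed

lemma simultaneous_dirichlet_mod:
  fixes q L :: nat and B :: "nat set"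
  assumes "finite B" "0 < L" "((q - 1) div L + 1) ^ card B < q"
  obtains t where "0 < t" "t < q" "\<forall>b\<in>B. \<exists>d. \<bar>d\<bar> < int L \<and> [int t * int b = d] (mod int q)"
proof -
  define c where "c = (q - 1) div L + 1"
  define g where "g t = restrict (\<lambda>b. (t * b) mod q div L) B" for t
  have "q > 0" using assms(3) by linarith
  have "(t * b) mod q div L < c" for t b
  proof -
    have "(t * b) mod q < q" using \<open>q > 0\<close> by simp
    then have "(t * b) mod q \<le> q - 1" by linarith
    then show ?thesis unfolding c_def using div_le_mono by (simp add: less_Suc_eq_le)
  qed
  then have "g ` {..<q} \<subseteq> B \<rightarrow>\<^sub>E {..<c}"
    by (auto simp: g_def)
  then have "card (g ` {..<q}) \<le> card (B \<rightarrow>\<^sub>E {..<c})"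
    by (intro card_mono) (simp_all add: finite_PiE assms(1))
  also have "\<dots> < q"
    using assms(3) by (simp add: card_PiE assms(1) c_def)
  finally have "\<not> inj_on g {..<q}"
    using card_image by fastforce
  then obtain u v where "u < q" "v < q" "u \<noteq> v" "g u = g v"
    unfolding inj_on_def by blast
  then have "\<exists>x y. x < y \<and> y < q \<and> g x = g y"
    by (metis linorder_neq_iff)
  then obtain x y where xy: "x < y" "y < q" "g x = g y"
    by blast
  have "\<exists>d. \<bar>d\<bar> < int L \<and> [int (y - x) * int b = d] (mod int q)" if "b \<in> B" for b
  proof (intro exI conjI)
    have "(y * b) mod q div L = (x * b) mod q div L"
      using fun_cong[OF xy(3), of b] that by (simp add: g_def)
    then show "\<bar>int ((y * b) mod q) - int ((x * b) mod q)\<bar> < int L"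
      using assms(2) by (rule abs_diff_lt_if_div_eq)
    have "int (y - x) * int b = int (y * b) - int (x * b)"
      using xy(1) by (simp add: of_nat_diff left_diff_distrib)
    then show "[int (y - x) * int b = int ((y * b) mod q) - int ((x * b) mod q)] (mod int q)"
      by (simp add: of_nat_mod cong_def mod_diff_eq)
  qed
  then show thesis using that[of "y - x"] xy by simp
qed

lemma boxes_power_less:
  fixes q L k :: nat and \<delta> :: real
  assumes "1 < q" "0 < \<delta>" "2 \<le> real q powr \<delta>" "real (1 + 2 * k) * \<delta> \<le> 1"
    "real q powr (1 - \<delta>) \<le> real L"
  shows "((q - 1) div L + 1) ^ k < q"
proof -
  define y where "y = real q powr \<delta>"
  have "0 < L"
    using assms(1,5) powr_gt_zero[of "real q" "1 - \<delta>"] by linarith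
  have "real ((q - 1) div L) * real L \<le> real (q - 1)"
    by (metis div_times_less_eq_dividend of_nat_le_iff of_nat_mult)
  also have "\<dots> < real q"
    using assms(1) by simp
  also have "\<dots> = y * real q powr (1 - \<delta>)"
    using assms(1) by (simp add: y_def flip: powr_add)
  also have "\<dots> \<le> y * real L"
    using assms(5) by (intro mult_left_mono) (simp_all add: y_def)
  finally have "real ((q - 1) div L) < y"
    using \<open>0 < L\<close> by (simp add: mult_less_cancel_right)
  then have "real ((q - 1) div L + 1) ^ k \<le> (y + 1) ^ k"
    by (intro power_mono) simp_all
  also have "\<dots> \<le> (y\<^sup>2) ^ k"
  proof -
    have "2 * y \<le> y * y" using assms(3) by (intro mult_right_mono) (simp_all add: y_def)
    then show ?thesis using assms(3) by (intro power_mono) (simp_all add: y_def power2_eq_square)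
  qed
  also have "\<dots> = real q powr (real (2 * k) * \<delta>)"
    using assms(1) by (simp add: y_def powr_power power_mult[symmetric] mult_ac)
  also have "\<dots> \<le> real q powr (1 - \<delta>)"
    using assms(1,4) by (intro powr_mono) (simp_all add: algebra_simps)
  also have "\<dots> < real q powr 1"
    using assms(1,2) by (intro powr_less_mono) simp_all
  finally have "real (((q - 1) div L + 1) ^ k) < real q"
    using assms(1) by simp
  then show ?thesis
    by (simp only: of_nat_less_iff)
qed

lemma cong_eq_if_abs_small:
  fixes a d m :: int
  assumes "[a = d] (mod m)" "2 * \<bar>a\<bar> \<le> m" "2 * \<bar>d\<bar> < m"
  shows "a = d"
proof (rule ccontr)
  assume "a \<noteq> d"
  moreover have "m dvd a - d" using assms(1) by (simp add: cong_iff_dvd_diff)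
  ultimately have "\<bar>m\<bar> \<le> \<bar>a - d\<bar>" by (intro dvd_imp_le_int) simp_all
  then show False using assms(2,3) by linarith
qed

lemma inverse_mod_prime:
  fixes q t :: nat
  assumes "prime q" "0 < t" "t < q"
  obtains h where "1 \<le> h" "h < q" "[t * h = 1] (mod q)"
proof -
  have "coprime q t"
    using assms by (intro prime_imp_coprime) (auto dest: dvd_imp_le)
  then have "coprime t q"
    by (simp add: coprime_commute)
  then obtain h0 where h0: "[t * h0 = 1] (mod q)" using cong_solve_coprime_nat by auto
  define h where "h = h0 mod q"
  have "[t * h = 1] (mod q)"
    using h0 by (simp add: h_def cong_def mod_mult_right_eq)
  moreover have "h \<noteq> 0"
  proof
    assume "h = 0"
    with calculation show False using prime_gt_1_nat[OF assms(1)] by (simp add: cong_def)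
  qed
  moreover have "h < q"
    using assms(3) by (simp add: h_def)
  ultimately show thesis using that[of h] by simp
qed

lemma inj_on_mult_mod_prime:
  fixes q h :: nat
  assumes "prime q" "0 < h" "h < q" "S \<subseteq> {0..<q}"
  shows "inj_on (\<lambda>s. (h * s) mod q) S"
proof (rule inj_onI)
  fix x y assume "x \<in> S" "y \<in> S" "(h * x) mod q = (h * y) mod q"
  moreover have "coprime q h"
    using assms(1-3) by (intro prime_imp_coprime) (auto dest: dvd_imp_le)
  ultimately have "[x = y] (mod q)"
    by (simp add: coprime_commute cong_mult_lcancel_nat flip: cong_def)
  moreover have "x < q" "y < q"
    using \<open>x \<in> S\<close> \<open>y \<in> S\<close> assms(4) by auto
  ultimately show "x = y"
    using cong_less_imp_eq_nat[of x q y] by simp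
qed

lemma large_frequency_cong_small:
  assumes "odd q" "[t * h = 1] (mod q)" "0 < L"
    and approx: "\<forall>b\<in>large_spectrum q S thr. \<exists>d. \<bar>d\<bar> < int L \<and> [int t * int b = d] (mod int q)"
    and large: "thr < norm (fT S (of_int (int h * a) / real q))"
  obtains d where "\<bar>d\<bar> < int L" "[a = d] (mod int q)"
proof -
  have a_th: "[a = int t * (int h * a)] (mod int q)"
    using cong_scalar_right[OF assms(2)[unfolded cong_int_iff[symmetric]], of a]
    by (simp add: cong_sym mult.assoc)
  show thesis
  proof (cases rule: large_spectrum_representative[OF assms(1) large])
    case 1
    then have "[a = 0] (mod int q)"
      using cong_trans[OF a_th cong_scalar_left[of _ 0 _ "int t"]] by simp
    then show thesis using that[of 0] assms(3) by simp
  next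
    case (2 b)
    then obtain d where d: "\<bar>d\<bar> < int L" "[int t * int b = d] (mod int q)" using approx by blast
    from 2(2) show thesis
    proof
      assume "[int h * a = int b] (mod int q)"
      then have "[a = d] (mod int q)"
        using cong_trans[OF a_th cong_trans[OF cong_scalar_left d(2)]] by blast
      then show thesis using that d(1) by blast
    next
      assume "[int h * a = - int b] (mod int q)"
      then have "[int t * (int h * a) = - (int t * int b)] (mod int q)"
        using cong_scalar_left by fastforce
      then have "[a = - d] (mod int q)"
        using cong_trans[OF a_th] cong_minus_minus_iff d(2) cong_trans by metis
      then show thesis using that[of "- d"] d(1) by simp
    qed
  qed
qed

lemma dilation_with_small_large_spectrum:
  fixes q L :: nat
  assumes "prime q" "odd q" "S \<subseteq> {0..<q}" "0 < L" "2 * L \<le> q + 1"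
    and box: "((q - 1) div L + 1) ^ card (large_spectrum q S thr) < q"
  obtains h where "1 \<le> h" "h < q"
    "\<And>a. 2 * \<bar>a\<bar> \<le> int q \<Longrightarrow> thr < norm (fT ((\<lambda>s. (h * s) mod q) ` S) (of_int a / real q))
       \<Longrightarrow> \<bar>a\<bar> < int L"
proof -
  have "q > 0" using assms(2) by (simp add: odd_pos)
  obtain t where t: "0 < t" "t < q"
    and approx: "\<forall>b\<in>large_spectrum q S thr. \<exists>d. \<bar>d\<bar> < int L \<and> [int t * int b = d] (mod int q)"
    using simultaneous_dirichlet_mod[OF _ assms(4) box] by (auto simp: large_spectrum_def)
  obtain h where h: "1 \<le> h" "h < q" and th: "[t * h = 1] (mod q)"
    using inverse_mod_prime[OF assms(1) t] .
  have inj: "inj_on (\<lambda>s. (h * s) mod q) S"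
    using h assms(1,3) by (intro inj_on_mult_mod_prime) simp_all
  have "\<bar>a\<bar> < int L"
    if a: "2 * \<bar>a\<bar> \<le> int q" and large: "thr < norm (fT ((\<lambda>s. (h * s) mod q) ` S) (of_int a / real q))"
    for a
  proof -
    have "thr < norm (fT S (of_int (int h * a) / real q))"
      using large fT_image_mult_mod[OF \<open>q > 0\<close> inj] by simp
    then obtain d where d: "\<bar>d\<bar> < int L" "[a = d] (mod int q)"
      using large_frequency_cong_small[OF assms(2) th assms(4) approx] by blast
    have "2 * \<bar>d\<bar> < int q" using d(1) assms(5) by linarith
    then have "a = d" using cong_eq_if_abs_small[OF d(2) a] by blast
    then show ?thesis using d(1) by simp
  qed
  then show thesis using that h by blast
qed

lemma dilation_with_small_large_spectrum_powr:
  fixes q :: nat and \<delta> thr :: real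
  assumes "prime q" "S \<subseteq> {0..<q}" "0 < \<delta>" "\<delta> < 1" "real q powr (1 - \<delta>) \<le> real q / 2"
    "real (1 + 2 * card (large_spectrum q S thr)) * \<delta> \<le> 1"
  obtains h where "1 \<le> h" "h < q"
    "\<And>a. \<bar>real_of_int a\<bar> \<le> real q / 2
       \<Longrightarrow> thr < norm (fT ((\<lambda>s. (h * s) mod q) ` S) (of_int a / real q))
       \<Longrightarrow> \<bar>real_of_int a\<bar> < real q powr (1 - \<delta>)"
proof -
  have "1 < q" using assms(1) by (rule prime_gt_1_nat)
  have "real q powr 0 < real q powr (1 - \<delta>)"
    using \<open>1 < q\<close> assms(4) by (intro powr_less_mono) simp_all
  then have "1 < real q powr (1 - \<delta>)"
    using \<open>1 < q\<close> by simp
  then have "q \<noteq> 2" using assms(5) by auto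
  then have "odd q" using assms(1) prime_odd_nat \<open>1 < q\<close> by force
  have "real q = real q powr \<delta> * real q powr (1 - \<delta>)"
    using \<open>1 < q\<close> by (simp flip: powr_add)
  also have "\<dots> \<le> real q powr \<delta> * (real q / 2)"
    using assms(5) by (intro mult_left_mono) simp_all
  finally have "2 \<le> real q powr \<delta>"
    using \<open>1 < q\<close> by simp
  define L where "L = nat \<lceil>real q powr (1 - \<delta>)\<rceil>"
  have L: "real q powr (1 - \<delta>) \<le> real L" "real L < real q powr (1 - \<delta>) + 1"
    unfolding L_def using \<open>1 < real q powr (1 - \<delta>)\<close> by linarith+
  have "0 < L" "2 * L \<le> q + 1"
    using L \<open>1 < real q powr (1 - \<delta>)\<close> assms(5) by linarith+
  moreover have "((q - 1) div L + 1) ^ card (large_spectrum q S thr) < q"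
    using boxes_power_less[OF \<open>1 < q\<close> assms(3) \<open>2 \<le> real q powr \<delta>\<close> assms(6) L(1)] .
  ultimately obtain h where h: "1 \<le> h" "h < q"
    and small: "\<And>a. 2 * \<bar>a\<bar> \<le> int q
       \<Longrightarrow> thr < norm (fT ((\<lambda>s. (h * s) mod q) ` S) (of_int a / real q)) \<Longrightarrow> \<bar>a\<bar> < int L"
    using dilation_with_small_large_spectrum[OF assms(1) \<open>odd q\<close> assms(2)] by blast
  show thesis
  proof (rule that[OF h])
    fix a :: int
    assume "\<bar>real_of_int a\<bar> \<le> real q / 2"
      and large: "thr < norm (fT ((\<lambda>s. (h * s) mod q) ` S) (of_int a / real q))"
    then have "2 * \<bar>a\<bar> \<le> int q" by linarith
    then have "\<bar>a\<bar> < int L" using small large by blast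
    then show "\<bar>real_of_int a\<bar> < real q powr (1 - \<delta>)" using L(2) by linarith
  qed
qed

theorem lemma1:
  fixes q :: nat and \<rho>1 \<epsilon> :: real and S :: "nat set"
  assumes "prime q"
    and "0 < \<rho>1" and "\<rho>1 < 1"
    and "0 < \<epsilon>" and "\<epsilon> < 1"
    and "S \<subseteq> {0..<q}"
    and "real (card S) \<ge> \<rho>1 * real q"
  shows "\<exists>h::nat. 1 \<le> h \<and> h \<le> q - 1 \<and>
           (\<forall>a::int. \<bar>real_of_int a\<bar> \<le> real q / 2 \<longrightarrow>
              norm (fT ((\<lambda>s. (h * s) mod q) ` S) (real_of_int a / real q)) > \<epsilon> * real (card S) \<longrightarrow>
              \<bar>real_of_int a\<bar> < real q powr (1 - \<rho>1 * \<epsilon>\<^sup>2))"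
proof -
  define \<delta> where "\<delta> = \<rho>1 * \<epsilon>\<^sup>2"
  have "1 < q" using assms(1) by (rule prime_gt_1_nat)
  have "0 < \<delta>"
    using assms(2,4) by (simp add: \<delta>_def)
  have "\<delta> < 1 * 1"
    unfolding \<delta>_def using assms(2-5) by (intro mult_strict_mono) (simp_all add: power_less_one_iff)
  then have "\<delta> < 1" by simp
  show ?thesis
  proof (cases "real q powr (1 - \<delta>) \<le> real q / 2")
    case False
    then show ?thesis using \<open>1 < q\<close> by (intro exI[of _ 1]) (auto simp: \<delta>_def)
  next
    case True
    have "real (1 + 2 * card (large_spectrum q S (\<epsilon> * real (card S)))) * \<delta> \<le> 1"
      unfolding \<delta>_def using \<open>1 < q\<close> assms(2,4-7)
      by (intro card_large_spectrum_density) simp_all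
    then obtain h where "1 \<le> h" "h < q"
      "\<And>a. \<bar>real_of_int a\<bar> \<le> real q / 2
         \<Longrightarrow> \<epsilon> * real (card S) < norm (fT ((\<lambda>s. (h * s) mod q) ` S) (of_int a / real q))
         \<Longrightarrow> \<bar>real_of_int a\<bar> < real q powr (1 - \<delta>)"
      using dilation_with_small_large_spectrum_powr[OF assms(1,6) \<open>0 < \<delta>\<close> \<open>\<delta> < 1\<close> True] by blast
    then show ?thesis unfolding \<delta>_def by (intro exI[of _ h]) auto
  qed
qed

end
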